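(* Let $m,n$ be positive integers and let $f$ be a non-constant function of $x$. Then \[ \partial^{-n}f\partial^{-m}= \begin{cases} (\partial^{-n}f)\partial^{-m}+\text{lower}, & n<m,\\ (\partial^{-n}f)\partial^{-n}+(-1)^n\partial^{-n}(\partial^{-n}f)+\text{lower}, & n=m,\\ (-1)^m\partial^{-n}(\partial^{-m}f)+\text{lower}, & n>m, \end{cases} \] where "lower" denotes nonlocal terms of lower order of nonlocality.
   Context: $\partial=\partial/\partial x$ and $\partial^{-1}$ is a formal inverse of $\partial$; operators are pseudo-differential operators in $\partial$. In the formulas, $(\partial^{-k}f)$ denotes the function obtained by applying $\partial^{-k}$ to $f$, regarded as a multiplication operator. An operator has order of nonlocality $k$ if its most negative power of $\partial$ (in the form $\sum_\alpha a_\alpha\partial^{-k}b_\alpha$ plus terms with $\partial^{-j}$, $j<k$, and local terms) is $\partial^{-k}$. *)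

theory Defs
  imports Main
begin

text \<open>An operator is its coefficient function: P s is the coefficient of the
  power \<partial>^s (s an integer); only operators with support bounded above occur.\<close>

type_synonym 'a pdo = "int \<Rightarrow> 'a"

definition derivation :: "('a::comm_ring_1 \<Rightarrow> 'a) \<Rightarrow> bool" where
  "derivation D \<longleftrightarrow> (\<forall>a b. D (a + b) = D a + D b \<and> D (a * b) = D a * b + a * D b)"

text \<open>Binomial coefficient (-j choose k) for j >= 1.\<close>
definition negbinom :: "nat \<Rightarrow> nat \<Rightarrow> int" where
  "negbinom j k = (-1) ^ k * int ((j + k - 1) choose k)"

text \<open>The operator a \<partial>^{-j} b (a, b multiplication operators), expanded in the
  pseudo-differential algebra: \<partial>^{-j} b = sum_k (-j choose k) (D^k b) \<partial>^{-j-k}.\<close>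
definition nlterm :: "('a::comm_ring_1 \<Rightarrow> 'a) \<Rightarrow> 'a \<Rightarrow> nat \<Rightarrow> 'a \<Rightarrow> 'a pdo" where
  "nlterm D a j b = (\<lambda>s. if s \<le> - int j
      then of_int (negbinom j (nat (- int j - s))) * a * (D ^^ nat (- int j - s)) b
      else 0)"

text \<open>Right composition with \<partial>^q: (P \<partial>^q) has coefficient P (s - q) at \<partial>^s.\<close>
definition rcomp_pow :: "'a pdo \<Rightarrow> int \<Rightarrow> 'a pdo" where
  "rcomp_pow P q = (\<lambda>s. P (s - q))"

definition lower_nonlocal :: "('a::comm_ring_1 \<Rightarrow> 'a) \<Rightarrow> nat \<Rightarrow> 'a pdo \<Rightarrow> bool" where
  "lower_nonlocal D k L \<longleftrightarrow>
     (\<exists>(N::nat) (a::nat \<Rightarrow> 'a) (b::nat \<Rightarrow> 'a) (j::nat \<Rightarrow> nat).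
        (\<forall>i<N. 1 \<le> j i \<and> j i < k) \<and>
        L = (\<lambda>s. \<Sum>i<N. nlterm D (a i) (j i) (b i) s))"

end

theory Submission
  imports Defs
begin

text \<open>Integration by parts: if \<open>D G = g\<close>, then
  \<open>\<partial>^(-n-1) g \<partial>^(-m-1) = \<partial>^(-n) G \<partial>^(-m-1) - \<partial>^(-n-1) G \<partial>^(-m)\<close>,
  while \<open>\<partial>^0 G \<partial>^(-m) = G \<partial>^(-m)\<close> and \<open>\<partial>^(-n) G \<partial>^0 = \<partial>^(-n) G\<close>.
  Unfolding this recurrence along the antiderivatives of \<open>f\<close> writes \<open>\<partial>^(-n) f \<partial>^(-m)\<close> as a
  signed sum of terms of order of nonlocality at most \<open>max n m\<close>. A term of full order \<open>m > n\<close>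
  arises only if every step lowers the left exponent, giving \<open>(\<partial>^(-n) f) \<partial>^(-m)\<close>; symmetrically,
  for \<open>n > m\<close> only lowering the right exponent \<open>m\<close> times survives, giving
  \<open>(-1)^m \<partial>^(-n) (\<partial>^(-m) f)\<close>; for \<open>n = m\<close> both paths survive.\<close>

definition dinv_mult_dinv :: "('a::comm_ring_1 \<Rightarrow> 'a) \<Rightarrow> nat \<Rightarrow> 'a \<Rightarrow> nat \<Rightarrow> 'a pdo" where
  "dinv_mult_dinv D n g m = rcomp_pow (nlterm D 1 n g) (- int m)"

lemma negbinom_0_right [simp]: "negbinom j 0 = 1"
  unfolding negbinom_def by simp

lemma negbinom_0_Suc [simp]: "negbinom 0 (Suc k) = 0"
  unfolding negbinom_def by simp

lemma negbinom_pascal: "negbinom (Suc j) k = negbinom j (Suc k) - negbinom (Suc j) (Suc k)"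
proof -
  have "(Suc (j + k) choose Suc k) = (j + k choose k) + (j + k choose Suc k)"
    by simp
  then show ?thesis
    unfolding negbinom_def by (simp add: algebra_simps)
qed

lemma derivation_zero: "derivation D \<Longrightarrow> D 0 = 0"
  unfolding derivation_def by (metis add_0 add_cancel_left_right)

lemma derivation_one: "derivation D \<Longrightarrow> D 1 = 0"
  unfolding derivation_def by (metis add_cancel_left_right mult_1 mult_1_right)

lemma derivation_funpow_one: "derivation D \<Longrightarrow> (D ^^ Suc k) 1 = 0"
  by (induction k) (auto simp: derivation_zero derivation_one)

lemma dinv_mult_dinv_0_left:
  assumes "derivation D"
  shows "dinv_mult_dinv D 0 g m = nlterm D g m 1"
proof
  fix s
  show "dinv_mult_dinv D 0 g m s = nlterm D g m 1 s"
  proof (cases "s \<le> - int m")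
    case True
    then obtain k where "s = - int m - int k"
      by (intro that[of "nat (- int m - s)"]) simp
    then show ?thesis
      using derivation_funpow_one[OF assms]
      unfolding dinv_mult_dinv_def rcomp_pow_def nlterm_def
      by (cases k) (simp_all add: nat_add_distrib del: funpow.simps)
  next
    case False
    then show ?thesis
      unfolding dinv_mult_dinv_def rcomp_pow_def nlterm_def by simp
  qed
qed

lemma dinv_mult_dinv_0_right: "dinv_mult_dinv D n g 0 = nlterm D 1 n g"
  unfolding dinv_mult_dinv_def rcomp_pow_def by simp

lemma dinv_mult_dinv_Suc_Suc:
  assumes "D G = g"
  shows "dinv_mult_dinv D (Suc n) g (Suc m) =
    (\<lambda>s. dinv_mult_dinv D n G (Suc m) s - dinv_mult_dinv D (Suc n) G m s)"
proof
  fix s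
  consider k where "s = - int (Suc n) - int (Suc m) - int k" | "s = - int n - int (Suc m)"
    | "s > - int n - int (Suc m)"
  proof (cases "s \<le> - int (Suc n) - int (Suc m)")
    case True
    then show thesis
      by (intro that(1)[of "nat (- int (Suc n) - int (Suc m) - s)"]) simp
  qed (use that in linarith)
  then show "dinv_mult_dinv D (Suc n) g (Suc m) s =
      dinv_mult_dinv D n G (Suc m) s - dinv_mult_dinv D (Suc n) G m s"
  proof cases
    case (1 k)
    have "(D ^^ Suc k) G = (D ^^ k) g"
      using assms by (simp add: funpow_swap1)
    then show ?thesis
      unfolding dinv_mult_dinv_def rcomp_pow_def nlterm_def 1
      by (simp add: negbinom_pascal[of n k] nat_add_distrib algebra_simps)
  qed (auto simp: dinv_mult_dinv_def rcomp_pow_def nlterm_def)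
qed

lemma lower_nonlocal_zero: "lower_nonlocal D k (\<lambda>s. 0)"
  unfolding lower_nonlocal_def by (intro exI[of _ 0]) simp

lemma lower_nonlocal_nlterm: "1 \<le> j \<Longrightarrow> j < k \<Longrightarrow> lower_nonlocal D k (nlterm D a j b)"
  unfolding lower_nonlocal_def
  by (intro exI[of _ 1] exI[of _ "\<lambda>_. a"] exI[of _ "\<lambda>_. b"] exI[of _ "\<lambda>_. j"]) simp

lemma lower_nonlocal_mono: "lower_nonlocal D k L \<Longrightarrow> k \<le> k' \<Longrightarrow> lower_nonlocal D k' L"
  unfolding lower_nonlocal_def by (blast intro: order_less_le_trans)

lemma lower_nonlocal_add:
  fixes D :: "'a::comm_ring_1 \<Rightarrow> 'a"
  assumes "lower_nonlocal D k L1" "lower_nonlocal D k L2"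
  shows "lower_nonlocal D k (\<lambda>s. L1 s + L2 s)"
proof -
  obtain N1 and a1 b1 :: "nat \<Rightarrow> 'a" and j1 where 1: "\<forall>i<N1. 1 \<le> j1 i \<and> j1 i < k"
    "L1 = (\<lambda>s. \<Sum>i<N1. nlterm D (a1 i) (j1 i) (b1 i) s)"
    using assms(1) unfolding lower_nonlocal_def by blast
  obtain N2 and a2 b2 :: "nat \<Rightarrow> 'a" and j2 where 2: "\<forall>i<N2. 1 \<le> j2 i \<and> j2 i < k"
    "L2 = (\<lambda>s. \<Sum>i<N2. nlterm D (a2 i) (j2 i) (b2 i) s)"
    using assms(2) unfolding lower_nonlocal_def by blast
  define a where "a i = (if i < N1 then a1 i else a2 (i - N1))" for i
  define b where "b i = (if i < N1 then b1 i else b2 (i - N1))" for i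
  define j where "j i = (if i < N1 then j1 i else j2 (i - N1))" for i
  have "\<forall>i<N1 + N2. 1 \<le> j i \<and> j i < k"
    using 1(1) 2(1) by (auto simp: j_def)
  moreover have "(\<lambda>s. L1 s + L2 s) =
      (\<lambda>s. \<Sum>i<N1 + N2. nlterm D (a i) (j i) (b i) s)"
  proof
    fix s
    show "L1 s + L2 s = (\<Sum>i<N1 + N2. nlterm D (a i) (j i) (b i) s)"
      unfolding 1(2) 2(2) by (induction N2) (simp_all add: a_def b_def j_def)
  qed
  ultimately show ?thesis
    unfolding lower_nonlocal_def by blast
qed

lemma lower_nonlocal_uminus:
  fixes D :: "'a::comm_ring_1 \<Rightarrow> 'a"
  assumes "lower_nonlocal D k L"
  shows "lower_nonlocal D k (\<lambda>s. - L s)"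
proof -
  obtain N and a b :: "nat \<Rightarrow> 'a" and j where "\<forall>i<N. 1 \<le> j i \<and> j i < k"
    and "L = (\<lambda>s. \<Sum>i<N. nlterm D (a i) (j i) (b i) s)"
    using assms unfolding lower_nonlocal_def by blast
  moreover have "nlterm D (- a') j' b' s = - nlterm D a' j' b' s" for a' j' b' s
    unfolding nlterm_def by simp
  ultimately have negated: "(\<forall>i<N. 1 \<le> j i \<and> j i < k) \<and>
      (\<lambda>s. - L s) = (\<lambda>s. \<Sum>i<N. nlterm D (- a i) (j i) (b i) s)"
    by (simp add: sum_negf)
  show ?thesis
    unfolding lower_nonlocal_def
    by (rule exI[of _ N], rule exI[of _ "\<lambda>i. - a i"], rule exI[of _ b], rule exI[of _ j], fact negated)
qed

lemma lower_nonlocal_diff: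
  "lower_nonlocal D k L1 \<Longrightarrow> lower_nonlocal D k L2 \<Longrightarrow> lower_nonlocal D k (\<lambda>s. L1 s - L2 s)"
  using lower_nonlocal_add[of D k L1 "\<lambda>s. - L2 s"] lower_nonlocal_uminus[of D k L2] by simp

lemma dinv_mult_dinv_Suc_Suc_antiderivs:
  assumes "\<forall>k. D (F (Suc k)) = F k"
  shows "dinv_mult_dinv D (Suc n) (F 0) (Suc m) =
    (\<lambda>s. dinv_mult_dinv D n (F (Suc 0)) (Suc m) s - dinv_mult_dinv D (Suc n) (F (Suc 0)) m s)"
  using assms by (intro dinv_mult_dinv_Suc_Suc) simp

lemma dinv_mult_dinv_lower_nonlocal:
  assumes "derivation D" and "\<forall>k. D (F (Suc k)) = F k" and "0 < n + m"
  shows "lower_nonlocal D (Suc (max n m)) (dinv_mult_dinv D n (F 0) m)"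
  using assms(2,3)
proof (induction "n + m" arbitrary: n m F rule: less_induct)
  case less
  show ?case
  proof (cases n)
    case 0
    then show ?thesis
      using less.prems by (simp add: dinv_mult_dinv_0_left[OF assms(1)] lower_nonlocal_nlterm)
  next
    case (Suc n')
    show ?thesis
    proof (cases m)
      case 0
      then show ?thesis
        using Suc by (simp add: dinv_mult_dinv_0_right lower_nonlocal_nlterm)
    next
      case (Suc m')
      have shifted: "\<forall>k. D (F (Suc (Suc k))) = F (Suc k)"
        using less.prems(1) by simp
      have "lower_nonlocal D (Suc (max n m)) (dinv_mult_dinv D n' (F (Suc 0)) (Suc m'))"
        and "lower_nonlocal D (Suc (max n m)) (dinv_mult_dinv D (Suc n') (F (Suc 0)) m')"
        using less.hyps[of n' "Suc m'" "\<lambda>k. F (Suc k)"] less.hyps[of "Suc n'" m' "\<lambda>k. F (Suc k)"]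
          shifted \<open>n = Suc n'\<close> Suc
        by (auto elim: lower_nonlocal_mono)
      then show ?thesis
        unfolding \<open>n = Suc n'\<close> Suc dinv_mult_dinv_Suc_Suc_antiderivs[OF less.prems(1)]
        using \<open>n = Suc n'\<close> Suc by (simp add: lower_nonlocal_diff)
    qed
  qed
qed

lemma dinv_mult_dinv_less:
  assumes "derivation D" and "\<forall>k. D (F (Suc k)) = F k" and "n < m"
  shows "\<exists>L. lower_nonlocal D m L \<and> dinv_mult_dinv D n (F 0) m = (\<lambda>s. nlterm D (F n) m 1 s + L s)"
  using assms(2,3)
proof (induction n arbitrary: F)
  case 0
  show ?case
    by (intro exI[of _ "\<lambda>s. 0"] conjI lower_nonlocal_zero) (simp add: dinv_mult_dinv_0_left[OF assms(1)])
next
  case (Suc n)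
  obtain m' where m: "m = Suc m'"
    using Suc.prems(2) by (cases m) auto
  obtain L where L: "lower_nonlocal D m L"
    and leading: "dinv_mult_dinv D n (F (Suc 0)) m = (\<lambda>s. nlterm D (F (Suc n)) m 1 s + L s)"
    using Suc.IH[of "\<lambda>k. F (Suc k)"] Suc.prems by auto
  have "lower_nonlocal D m (dinv_mult_dinv D (Suc n) (F (Suc 0)) m')"
    using dinv_mult_dinv_lower_nonlocal[OF assms(1), of "\<lambda>k. F (Suc k)" "Suc n" m'] Suc.prems m
    by simp
  with L have "lower_nonlocal D m (\<lambda>s. L s - dinv_mult_dinv D (Suc n) (F (Suc 0)) m' s)"
    by (rule lower_nonlocal_diff)
  moreover have "dinv_mult_dinv D (Suc n) (F 0) m =
      (\<lambda>s. nlterm D (F (Suc n)) m 1 s + (L s - dinv_mult_dinv D (Suc n) (F (Suc 0)) m' s))"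
    unfolding m dinv_mult_dinv_Suc_Suc_antiderivs[OF Suc.prems(1)] using leading m
    by (simp add: algebra_simps)
  ultimately show ?case
    by blast
qed

lemma dinv_mult_dinv_greater:
  assumes "derivation D" and "\<forall>k. D (F (Suc k)) = F k" and "m < n"
  shows "\<exists>L. lower_nonlocal D n L \<and>
    dinv_mult_dinv D n (F 0) m = (\<lambda>s. (-1) ^ m * nlterm D 1 n (F m) s + L s)"
  using assms(2,3)
proof (induction m arbitrary: F)
  case 0
  show ?case
    by (intro exI[of _ "\<lambda>s. 0"] conjI lower_nonlocal_zero) (simp add: dinv_mult_dinv_0_right)
next
  case (Suc m)
  obtain n' where n: "n = Suc n'"
    using Suc.prems(2) by (cases n) auto
  obtain L where L: "lower_nonlocal D n L"
    and leading: "dinv_mult_dinv D n (F (Suc 0)) m = (\<lambda>s. (-1) ^ m * nlterm D 1 n (F (Suc m)) s + L s)"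
    using Suc.IH[of "\<lambda>k. F (Suc k)"] Suc.prems by auto
  have "lower_nonlocal D n (dinv_mult_dinv D n' (F (Suc 0)) (Suc m))"
    using dinv_mult_dinv_lower_nonlocal[OF assms(1), of "\<lambda>k. F (Suc k)" n' "Suc m"] Suc.prems n
    by simp
  then have "lower_nonlocal D n (\<lambda>s. dinv_mult_dinv D n' (F (Suc 0)) (Suc m) s - L s)"
    using L by (rule lower_nonlocal_diff)
  moreover have "dinv_mult_dinv D n (F 0) (Suc m) =
      (\<lambda>s. (-1) ^ Suc m * nlterm D 1 n (F (Suc m)) s + (dinv_mult_dinv D n' (F (Suc 0)) (Suc m) s - L s))"
    unfolding n dinv_mult_dinv_Suc_Suc_antiderivs[OF Suc.prems(1)] using leading n
    by (simp add: algebra_simps)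
  ultimately show ?case
    by blast
qed

lemma dinv_mult_dinv_same:
  assumes "derivation D" and "\<forall>k. D (F (Suc k)) = F k" and "0 < n"
  shows "\<exists>L. lower_nonlocal D n L \<and> dinv_mult_dinv D n (F 0) n =
    (\<lambda>s. nlterm D (F n) n 1 s + (-1) ^ n * nlterm D 1 n (F n) s + L s)"
proof -
  obtain n' where n: "n = Suc n'"
    using assms(3) by (cases n) auto
  have shifted: "\<forall>k. D (F (Suc (Suc k))) = F (Suc k)"
    using assms(2) by simp
  obtain L1 where L1: "lower_nonlocal D n L1"
    and "dinv_mult_dinv D n' (F (Suc 0)) n = (\<lambda>s. nlterm D (F n) n 1 s + L1 s)"
    using dinv_mult_dinv_less[OF assms(1) shifted, of n' n] n by auto
  moreover obtain L2 where L2: "lower_nonlocal D n L2"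
    and "dinv_mult_dinv D n (F (Suc 0)) n' = (\<lambda>s. (-1) ^ n' * nlterm D 1 n (F n) s + L2 s)"
    using dinv_mult_dinv_greater[OF assms(1) shifted, of n' n] n by auto
  ultimately have "dinv_mult_dinv D n (F 0) n =
      (\<lambda>s. nlterm D (F n) n 1 s + (-1) ^ n * nlterm D 1 n (F n) s + (L1 s - L2 s))"
    unfolding n dinv_mult_dinv_Suc_Suc_antiderivs[OF assms(2)] by (simp add: algebra_simps)
  then show ?thesis
    using lower_nonlocal_diff[OF L1 L2] by blast
qed

theorem mainTheorem4:
  fixes D :: "'a::comm_ring_1 \<Rightarrow> 'a" and f :: 'a and F :: "nat \<Rightarrow> 'a" and n m :: nat
  assumes "derivation D"
    and "0 < n" and "0 < m"
    and "D f \<noteq> 0"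
    and "F 0 = f" and "\<forall>k. D (F (Suc k)) = F k"
  shows "\<exists>L. lower_nonlocal D (max n m) L \<and>
    rcomp_pow (nlterm D 1 n f) (- int m) =
      (\<lambda>s. (if n < m then nlterm D (F n) m 1 s
            else if n = m then nlterm D (F n) n 1 s + (-1) ^ n * nlterm D 1 n (F n) s
            else (-1) ^ m * nlterm D 1 n (F m) s) + L s)"
proof -
  \<comment> \<open>The expansion holds for every \<open>f\<close>.\<close>
  have op: "rcomp_pow (nlterm D 1 n f) (- int m) = dinv_mult_dinv D n (F 0) m"
    unfolding dinv_mult_dinv_def assms(5) ..
  consider "n < m" | "n = m" | "m < n"
    by linarith
  then show ?thesis
  proof cases
    case 1
    then show ?thesis
      using dinv_mult_dinv_less[OF assms(1,6) 1] unfolding op by (simp add: max_def)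
  next
    case 2
    then show ?thesis
      using dinv_mult_dinv_same[OF assms(1,6,2)] unfolding op by (simp add: add.assoc)
  next
    case 3
    then show ?thesis
      using dinv_mult_dinv_greater[OF assms(1,6) 3] unfolding op by (simp add: max_def)
  qed
qed

end
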